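(* Let $\Delta>0$, $h>0$, $N\in\mathbb{N}$, $\gamma>0$, $\sigma^2>0$ and real numbers $\eta_1,\dots,\eta_N$ be given. Let $u:\mathbb{R}\to\mathbb{R}$ be a known deterministic causal input ($u(t)=0$ for $t<0$). Let $g$ be a zero-mean Gaussian process on $[0,\infty)$ with covariance $\mathbb{E}\{g(t)g(s)\}=k(t,s)/\gamma$, and let $v(\Delta),\dots,v(N\Delta)$ be i.i.d. $\mathcal{N}(0,\sigma^2)$ random variables independent of $g$. Set $z(i\Delta)=(g*u)(i\Delta)+v(i\Delta)$, where $(g*u)(t)=\int_0^\infty g(\tau)u(t-\tau)\,\mathrm{d}\tau$, and suppose the observed data is the event $\mathcal{Y}_{1:N}=\{z(i\Delta)\in[\eta_i,\eta_i+h),\ i=1,\dots,N\}$. Let $\{t_i\}_{i=1}^{N+M}$ be finitely many real numbers with $t_i=i\Delta$ for $i=1,\dots,N$ and $t_{N+1},\dots,t_{N+M}$ arbitrary, and define $\mathbf{x}=[(g*u)(t_1),\dots,(g*u)(t_{N+M})]^\top$; assume the (Gaussian) covariance matrix of $\mathbf{x}$ is nonsingular. Let $\breve{g}$ be a minimizer over $g\in\mathcal{G}$ of $$-2\sum_{i=1}^{N}\log\left[\int_{\eta_i}^{\eta_i+h}\exp\Big(-\tfrac{1}{2\sigma^2}\big[z_i-(g*u)(i\Delta)\big]^2\Big)\mathrm{d}z_i\right]+\gamma\|g\|_{\mathcal{G}}^2 .$$ Then the maximum a posteriori (MAP) estimate of $\mathbf{x}$ given $\mathcal{Y}_{1:N}$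 is $\hat{\mathbf{x}}=[(\breve g*u)(t_1),\dots,(\breve g*u)(t_{N+M})]^\top$.
   Context: $k:\mathbb{R}_+\times\mathbb{R}_+\to\mathbb{R}$ is a positive-definite kernel and $\mathcal{G}$ is the reproducing kernel Hilbert space (RKHS) it induces, with norm $\|\cdot\|_{\mathcal{G}}$. It is assumed that $u$ and $\mathcal{G}$ are such that each evaluation $g\mapsto (g*u)(t)$ (for the relevant $t$) is a bounded linear functional on $\mathcal{G}$. The kernel matrix $\mathbf{K}\in\mathbb{R}^{N\times N}$ has entries $\mathbf{K}_{ij}=\int_0^\infty\int_0^\infty u(i\Delta-\xi)u(j\Delta-\tau)k(\xi,\tau)\,\mathrm{d}\tau\,\mathrm{d}\xi$ and is assumed nonsingular. *)

theory Defs
  imports "HOL-Analysis.Analysis" "Jordan_Normal_Form.Determinant"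
begin

definition pos_def_kernel :: "(real \<Rightarrow> real \<Rightarrow> real) \<Rightarrow> bool" where
  "pos_def_kernel k \<longleftrightarrow>
     (\<forall>x y. 0 \<le> x \<longrightarrow> 0 \<le> y \<longrightarrow> k x y = k y x) \<and>
     (\<forall>(n::nat) (c::nat \<Rightarrow> real) (x::nat \<Rightarrow> real). (\<forall>i<n. 0 \<le> x i) \<longrightarrow>
        0 \<le> (\<Sum>i<n. \<Sum>j<n. c i * c j * k (x i) (x j)))"

text \<open>The Hilbert space 'h, whose elements are realised as functions on [0,inf) via ev,
  is the RKHS induced by k: the kernel sections belong to it, the reproducing property
  holds, and the kernel sections span a dense subspace.\<close>
definition is_rkhs :: "(real \<Rightarrow> real \<Rightarrow> real) \<Rightarrow> ('h::{real_inner,complete_space} \<Rightarrow> real \<Rightarrow> real) \<Rightarrow> bool" where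
  "is_rkhs k ev \<longleftrightarrow>
     (\<exists>kf :: real \<Rightarrow> 'h.
        (\<forall>x y. 0 \<le> x \<longrightarrow> 0 \<le> y \<longrightarrow> ev (kf x) y = k y x) \<and>
        (\<forall>g x. 0 \<le> x \<longrightarrow> ev g x = inner g (kf x)) \<and>
        closure (span (kf ` {0..})) = UNIV)"

definition conv :: "('h \<Rightarrow> real \<Rightarrow> real) \<Rightarrow> (real \<Rightarrow> real) \<Rightarrow> 'h \<Rightarrow> real \<Rightarrow> real" where
  "conv ev u g t = (LINT \<tau>:{0..}|lborel. ev g \<tau> * u (t - \<tau>))"

text \<open>Covariance matrix of x = [(g*u)(t_1),...,(g*u)(t_n)] when g is a zero-mean GP with
  covariance k/gamma. Row/column j (0-based) corresponds to t_(j+1).\<close>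
definition cov_mat :: "real \<Rightarrow> (real \<Rightarrow> real \<Rightarrow> real) \<Rightarrow> (real \<Rightarrow> real) \<Rightarrow> (nat \<Rightarrow> real) \<Rightarrow> nat \<Rightarrow> real mat" where
  "cov_mat \<gamma> k u t n = mat n n (\<lambda>(j,l). (1/\<gamma>) *
      (LINT \<xi>:{0..}|lborel. LINT \<tau>:{0..}|lborel. u (t (j+1) - \<xi>) * u (t (l+1) - \<tau>) * k \<xi> \<tau>))"

definition mat_inv :: "real mat \<Rightarrow> real mat" where
  "mat_inv A = (SOME B. B \<in> carrier_mat (dim_row A) (dim_row A) \<and> inverts_mat A B \<and> inverts_mat B A)"

definition gauss_density :: "real mat \<Rightarrow> real vec \<Rightarrow> real" where
  "gauss_density S x = exp (- (x \<bullet> (mat_inv S *\<^sub>v x)) / 2) / sqrt ((2*pi) ^ dim_row S * det S)"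

text \<open>Likelihood P(Y_{1:N} | x): z_i = x_i + v_i, v_i iid N(0,sigma^2), z_i in [eta_i, eta_i+h).\<close>
definition likelihood :: "nat \<Rightarrow> real \<Rightarrow> real \<Rightarrow> (nat \<Rightarrow> real) \<Rightarrow> real vec \<Rightarrow> real" where
  "likelihood N \<sigma>2 h \<eta> x = (\<Prod>i=1..N.
      (LBINT z:{\<eta> i..<\<eta> i + h}. exp (- (z - x $ (i-1))\<^sup>2 / (2*\<sigma>2)) / sqrt (2*pi*\<sigma>2)))"

text \<open>Posterior density of x given Y_{1:N}, up to the positive constant 1/P(Y_{1:N}).\<close>
definition post_unnorm :: "real mat \<Rightarrow> nat \<Rightarrow> real \<Rightarrow> real \<Rightarrow> (nat \<Rightarrow> real) \<Rightarrow> real vec \<Rightarrow> real" where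
  "post_unnorm S N \<sigma>2 h \<eta> x = gauss_density S x * likelihood N \<sigma>2 h \<eta> x"

definition is_MAP :: "real mat \<Rightarrow> nat \<Rightarrow> real \<Rightarrow> real \<Rightarrow> (nat \<Rightarrow> real) \<Rightarrow> real vec \<Rightarrow> bool" where
  "is_MAP S N \<sigma>2 h \<eta> x \<longleftrightarrow> x \<in> carrier_vec (dim_row S) \<and>
     (\<forall>y \<in> carrier_vec (dim_row S). post_unnorm S N \<sigma>2 h \<eta> y \<le> post_unnorm S N \<sigma>2 h \<eta> x)"

definition crit :: "('h::real_inner \<Rightarrow> real \<Rightarrow> real) \<Rightarrow> (real \<Rightarrow> real) \<Rightarrow> real \<Rightarrow> nat \<Rightarrow> real \<Rightarrow> real \<Rightarrow> real \<Rightarrow> (nat \<Rightarrow> real) \<Rightarrow> 'h \<Rightarrow> real" where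
  "crit ev u \<Delta> N \<gamma> \<sigma>2 h \<eta> g =
     - 2 * (\<Sum>i=1..N. ln (LBINT z:{\<eta> i..<\<eta> i + h}.
              exp (- (z - conv ev u g (real i * \<Delta>))\<^sup>2 / (2*\<sigma>2))))
     + \<gamma> * (norm g)\<^sup>2"

end

theory Submission
  imports Defs
begin

text \<open>By the Riesz representation theorem each evaluation g \<mapsto> (g * u)(t_j) is an inner
  product with some r_j, and the covariance matrix S of x is the Gram matrix G of the r_j divided
  by \<gamma>. The least norm of a g with prescribed values y of these functionals is attained by a
  combination of the r_j, and its square is y' G^-1 y (representer theorem). Hence minimising the
  regularised criterion over the RKHS amounts to minimising y' S^-1 y - 2 log P(Y | y) over y,
  which is minus twice the log-posterior up to a constant. The minimiser is unique because the
  quadratic term is strictly convex and each likelihood factor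
  x \<mapsto> \<integral> exp (-(z - x)^2 / 2\<sigma>^2) dz over [a, b) is log-concave in x.\<close>

section \<open>Minimal-norm points and the Riesz representation\<close>

lemma exists_min_norm_point:
  fixes C :: "'a::{real_inner,complete_space} set"
  assumes "closed C" and "convex C" and "C \<noteq> {}"
  obtains g0 where "g0 \<in> C" and "\<And>y. y \<in> C \<Longrightarrow> norm g0 \<le> norm y"
proof -
  define d where "d = Inf ((\<lambda>g. (norm g)\<^sup>2) ` C)"
  have bdd: "bdd_below ((\<lambda>g. (norm g)\<^sup>2) ` C)" by (intro bdd_belowI[of _ 0]) auto
  have d_le: "d \<le> (norm y)\<^sup>2" if "y \<in> C" for y
    unfolding d_def using that bdd by (intro cInf_lower) auto
  have "\<exists>g\<in>C. (norm g)\<^sup>2 < d + 1 / (real n + 1)" for n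
    using cInf_less_iff[OF _ bdd, of "d + 1 / (real n + 1)"] \<open>C \<noteq> {}\<close> unfolding d_def by auto
  then obtain g where gC: "\<And>n. g n \<in> C" and g_norm: "\<And>n. (norm (g n))\<^sup>2 < d + 1 / (real n + 1)"
    by metis
  \<comment> \<open>The parallelogram law turns the near-minimality of both g m and g n and of their
     midpoint into closeness of g m and g n.\<close>
  have close: "(norm (g m - g n))\<^sup>2 \<le> 2 / (real m + 1) + 2 / (real n + 1)" for m n
  proof -
    have "(1/2) *\<^sub>R (g m + g n) \<in> C"
      using convexD[OF \<open>convex C\<close> gC gC, of "1/2" "1/2"] by (simp add: scaleR_add_right)
    from d_le[OF this] have "4 * d \<le> (norm (g m + g n))\<^sup>2"
      by (simp add: power_mult_distrib power2_eq_square)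
    moreover have "(norm (g m - g n))\<^sup>2 + (norm (g m + g n))\<^sup>2 = 2 * (norm (g m))\<^sup>2 + 2 * (norm (g n))\<^sup>2"
      by (simp add: power2_norm_eq_inner inner_add inner_diff inner_commute algebra_simps)
    ultimately show ?thesis using g_norm[of m] g_norm[of n] by linarith
  qed
  have "Cauchy g"
  proof (rule CauchyI)
    fix \<epsilon> :: real assume "\<epsilon> > 0"
    obtain K :: nat where K: "inverse (real (Suc K)) < \<epsilon>\<^sup>2 / 4"
      using reals_Archimedean[of "\<epsilon>\<^sup>2 / 4"] \<open>\<epsilon> > 0\<close> by auto
    have "norm (g m - g n) < \<epsilon>" if "K \<le> m" "K \<le> n" for m n
    proof (rule power_less_imp_less_base[of _ 2])
      have "2 / (real m + 1) \<le> 2 / (real K + 1)" "2 / (real n + 1) \<le> 2 / (real K + 1)"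
        using that by (simp_all add: frac_le)
      moreover have "2 / (real K + 1) < \<epsilon>\<^sup>2 / 2"
        using K by (simp add: inverse_eq_divide field_simps)
      ultimately show "(norm (g m - g n))\<^sup>2 < \<epsilon>\<^sup>2" using close[of m n] by linarith
    qed (use \<open>\<epsilon> > 0\<close> in simp)
    then show "\<exists>K. \<forall>m\<ge>K. \<forall>n\<ge>K. norm (g m - g n) < \<epsilon>" by blast
  qed
  then obtain g0 where lim: "g \<longlonglongrightarrow> g0"
    using Cauchy_convergent unfolding convergent_def by blast
  have "g0 \<in> C" by (rule closed_sequentially[OF \<open>closed C\<close> _ lim]) (simp add: gC)
  have g0_norm: "(norm g0)\<^sup>2 \<le> d"
  proof (rule LIMSEQ_le)
    show "(\<lambda>n. (norm (g n))\<^sup>2) \<longlonglongrightarrow> (norm g0)\<^sup>2" by (intro tendsto_intros lim)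
    show "(\<lambda>n. d + 1 / (real n + 1)) \<longlonglongrightarrow> d"
      using LIMSEQ_inverse_real_of_nat_add[of d] by (simp add: inverse_eq_divide add.commute)
    show "\<exists>N. \<forall>n\<ge>N. (norm (g n))\<^sup>2 \<le> d + 1 / (real n + 1)"
      using g_norm by (auto intro: less_imp_le)
  qed
  have "norm g0 \<le> norm y" if "y \<in> C" for y
  proof (rule power2_le_imp_le)
    show "(norm g0)\<^sup>2 \<le> (norm y)\<^sup>2" using g0_norm d_le[OF that] by linarith
  qed simp
  with \<open>g0 \<in> C\<close> show ?thesis by (rule that)
qed

lemma min_norm_point_orthogonal:
  fixes L :: "'a::real_inner \<Rightarrow> real"
  assumes "linear L" and "L g0 = 1" and min: "\<And>y. L y = 1 \<Longrightarrow> norm g0 \<le> norm y"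
    and "L k = 0"
  shows "inner g0 k = 0"
proof -
  define c where "c = inner g0 k"
  define q where "q = inner k k"
  have "q \<ge> 0" unfolding q_def by simp
  define s where "s = - c / (q + 1)"
  have "L (g0 + s *\<^sub>R k) = 1"
    using \<open>L g0 = 1\<close> \<open>L k = 0\<close> linear_add[OF \<open>linear L\<close>] linear_scale[OF \<open>linear L\<close>] by simp
  from min[OF this] have "inner g0 g0 \<le> inner (g0 + s *\<^sub>R k) (g0 + s *\<^sub>R k)"
    by (simp add: norm_le)
  then have "0 \<le> 2 * s * c + s\<^sup>2 * q"
    unfolding c_def q_def by (simp add: inner_add inner_commute power2_eq_square algebra_simps)
  then have "0 \<le> (q + 1)\<^sup>2 * (2 * s * c + s\<^sup>2 * q)" by simp
  moreover have "(q + 1)\<^sup>2 * (2 * s * c + s\<^sup>2 * q) = 2 * c * (q + 1) * ((q + 1) * s) + ((q + 1) * s)\<^sup>2 * q"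
    by (simp add: power2_eq_square algebra_simps)
  moreover have "(q + 1) * s = - c" using \<open>q \<ge> 0\<close> by (simp add: s_def)
  moreover have "2 * c * (q + 1) * - c + (- c)\<^sup>2 * q = - c\<^sup>2 * (q + 2)"
    by (simp add: power2_eq_square algebra_simps)
  ultimately have "c\<^sup>2 * (q + 2) \<le> 0" by simp
  moreover have "0 \<le> c\<^sup>2 * (q + 2)" using \<open>q \<ge> 0\<close> by simp
  ultimately have "c\<^sup>2 * (q + 2) = 0" by linarith
  then show ?thesis using \<open>q \<ge> 0\<close> unfolding c_def by simp
qed

lemma riesz_representation:
  fixes L :: "'a::{real_inner,complete_space} \<Rightarrow> real"
  assumes "bounded_linear L"
  shows "\<exists>r. \<forall>g. L g = inner r g"
proof (cases "\<forall>g. L g = 0")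
  case True
  then show ?thesis by (intro exI[of _ 0]) simp
next
  case False
  interpret L: bounded_linear L by fact
  obtain e where "L e \<noteq> 0" using False by blast
  then have "e /\<^sub>R L e \<in> L -` {1}" by (simp add: L.scale)
  then have "L -` {1} \<noteq> {}" by blast
  moreover have "closed (L -` {1})"
    by (intro continuous_closed_vimage closed_singleton linear_continuous_at assms)
  moreover have "convex (L -` {1})"
    by (intro convex_linear_vimage L.linear_axioms convex_singleton)
  ultimately obtain g0 where "g0 \<in> L -` {1}" and min: "\<And>y. y \<in> L -` {1} \<Longrightarrow> norm g0 \<le> norm y"
    by (metis exists_min_norm_point)
  then have "L g0 = 1" by simp
  have "L g = inner (g0 /\<^sub>R inner g0 g0) g" for g
  proof -
    have "L (g - L g *\<^sub>R g0) = 0" using \<open>L g0 = 1\<close> by (simp add: L.diff L.scale)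
    then have "inner g0 (g - L g *\<^sub>R g0) = 0"
      using min_norm_point_orthogonal[OF L.linear_axioms \<open>L g0 = 1\<close>] min by simp
    then have "inner g0 g = L g * inner g0 g0" by (simp add: inner_diff_right)
    moreover have "inner g0 g0 \<noteq> 0" using \<open>L g0 = 1\<close> by auto
    ultimately show ?thesis by simp
  qed
  then show ?thesis by blast
qed

section \<open>Gram matrices and minimal-norm interpolation\<close>

lemma index_mult_mat_vec_sum:
  fixes A :: "'a::comm_semiring_0 mat"
  assumes "A \<in> carrier_mat n n" and "v \<in> carrier_vec n" and "i < n"
  shows "(A *\<^sub>v v) $ i = (\<Sum>j<n. A $$ (i, j) * v $ j)"
  using assms by (auto simp: scalar_prod_def atLeast0LessThan intro!: sum.cong)

lemma smult_mat_mult_mat_vec: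
  fixes A :: "'a::comm_semiring_0 mat"
  assumes "A \<in> carrier_mat nr nc" and "v \<in> carrier_vec nc"
  shows "(k \<cdot>\<^sub>m A) *\<^sub>v v = k \<cdot>\<^sub>v (A *\<^sub>v v)"
  using assms by (intro eq_vecI) (auto simp: scalar_prod_def sum_distrib_left ac_simps)

lemma mat_inv_inverts:
  assumes "invertible_mat A"
  shows "mat_inv A \<in> carrier_mat (dim_row A) (dim_row A)"
    and "A * mat_inv A = 1\<^sub>m (dim_row A)" and "mat_inv A * A = 1\<^sub>m (dim_row A)"
proof -
  obtain B where "inverts_mat A B" and "inverts_mat B A" and "square_mat A"
    using assms unfolding invertible_mat_def by blast
  then have "B \<in> carrier_mat (dim_row A) (dim_row A)"
    unfolding inverts_mat_def
    by (metis carrier_matI index_mult_mat(2,3) index_one_mat(2,3) square_mat.simps)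
  with \<open>inverts_mat A B\<close> \<open>inverts_mat B A\<close>
  have "\<exists>B. B \<in> carrier_mat (dim_row A) (dim_row A) \<and> inverts_mat A B \<and> inverts_mat B A" by blast
  then have "mat_inv A \<in> carrier_mat (dim_row A) (dim_row A) \<and>
      inverts_mat A (mat_inv A) \<and> inverts_mat (mat_inv A) A"
    unfolding mat_inv_def by (rule someI_ex)
  then show "mat_inv A \<in> carrier_mat (dim_row A) (dim_row A)"
    and "A * mat_inv A = 1\<^sub>m (dim_row A)" and "mat_inv A * A = 1\<^sub>m (dim_row A)"
    unfolding inverts_mat_def by auto
qed

lemma det_pos_if_psd:
  fixes A :: "real mat"
  assumes A: "A \<in> carrier_mat n n"
    and psd: "\<And>v :: real vec. v \<in> carrier_vec n \<Longrightarrow> 0 \<le> v \<bullet> (A *\<^sub>v v)"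
    and "det A \<noteq> 0"
  shows "det A > 0"
proof -
  define M where "M t = t \<cdot>\<^sub>m A + (1 - t) \<cdot>\<^sub>m 1\<^sub>m n" for t :: real
  have M: "M t \<in> carrier_mat n n" for t using A unfolding M_def by simp
  have "det (M t) \<noteq> 0" if "0 \<le> t" "t < 1" for t
  proof
    assume "det (M t) = 0"
    then obtain v where v: "v \<in> carrier_vec n" "v \<noteq> 0\<^sub>v n" "M t *\<^sub>v v = 0\<^sub>v n"
      using det_0_iff_vec_prod_zero[OF M] by blast
    have "M t *\<^sub>v v = (t \<cdot>\<^sub>m A) *\<^sub>v v + ((1 - t) \<cdot>\<^sub>m 1\<^sub>m n) *\<^sub>v v"
      unfolding M_def using A v(1) by (intro add_mult_distrib_mat_vec) auto
    also have "\<dots> = t \<cdot>\<^sub>v (A *\<^sub>v v) + (1 - t) \<cdot>\<^sub>v v"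
      using A v(1) by (simp add: smult_mat_mult_mat_vec[of _ n n])
    finally have "M t *\<^sub>v v = t \<cdot>\<^sub>v (A *\<^sub>v v) + (1 - t) \<cdot>\<^sub>v v" .
    moreover have "A *\<^sub>v v \<in> carrier_vec n" using A v(1) by (rule mult_mat_vec_carrier)
    ultimately have "v \<bullet> (M t *\<^sub>v v) = t * (v \<bullet> (A *\<^sub>v v)) + (1 - t) * (v \<bullet> v)"
      using v(1) by (simp add: scalar_prod_add_distrib[of v n])
    then have "0 = t * (v \<bullet> (A *\<^sub>v v)) + (1 - t) * (v \<bullet> v)" using v(1,3) by simp
    moreover have "0 < v \<bullet> v"
      using conjugate_square_greater_0_vec[OF v(1)] v(2) by simp
    ultimately show False using psd[OF v(1)] that
      by (smt (verit) mult_nonneg_nonneg mult_pos_pos)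
  qed
  moreover have "continuous_on {0..1} (\<lambda>t. det (M t))"
  proof -
    have "det (M t) = (\<Sum>p\<in>{p. p permutes {0..<n}}. signof p *
        (\<Prod>i = 0..<n. t * A $$ (i, p i) + (1 - t) * (if i = p i then 1 else 0)))" for t
      unfolding det_def'[OF M]
      by (intro sum.cong refl arg_cong[where f="\<lambda>x. _ * x"] prod.cong)
         (use A in \<open>auto simp: M_def dest: permutes_in_image\<close>)
    then show ?thesis by (simp only:) (intro continuous_intros)
  qed
  moreover have "M 0 = 1\<^sub>m n" and "M 1 = A" using A unfolding M_def by auto
  ultimately show ?thesis
    using IVT2'[of "\<lambda>t. det (M t)" 1 0 0] \<open>det A \<noteq> 0\<close>
    by (smt (verit) atLeastAtMost_iff det_one)
qed

definition gram_mat :: "nat \<Rightarrow> (nat \<Rightarrow> 'a::real_inner) \<Rightarrow> real mat" where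
  "gram_mat n r = mat n n (\<lambda>(i, j). inner (r i) (r j))"

definition inner_vec :: "nat \<Rightarrow> (nat \<Rightarrow> 'a::real_inner) \<Rightarrow> 'a \<Rightarrow> real vec" where
  "inner_vec n r g = vec n (\<lambda>i. inner (r i) g)"

lemma gram_mat_carrier [simp]: "gram_mat n r \<in> carrier_mat n n"
  by (simp add: gram_mat_def)

lemma dim_gram_mat [simp]: "dim_row (gram_mat n r) = n" "dim_col (gram_mat n r) = n"
  by (simp_all add: gram_mat_def)

lemma gram_mat_quadratic_form:
  fixes v :: "real vec"
  assumes "v \<in> carrier_vec n"
  shows "v \<bullet> (gram_mat n r *\<^sub>v v) = (norm (\<Sum>i<n. v $ i *\<^sub>R r i))\<^sup>2"
proof -
  have "v \<bullet> (gram_mat n r *\<^sub>v v) = (\<Sum>i<n. v $ i * (\<Sum>j<n. inner (r i) (r j) * v $ j))"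
    using assms by (simp add: scalar_prod_def atLeast0LessThan index_mult_mat_vec_sum gram_mat_def)
  also have "\<dots> = inner (\<Sum>i<n. v $ i *\<^sub>R r i) (\<Sum>j<n. v $ j *\<^sub>R r j)"
    unfolding inner_sum_left inner_sum_right by (subst sum.swap) (simp add: sum_distrib_left ac_simps)
  finally show ?thesis by (simp add: power2_norm_eq_inner)
qed

lemma gram_mat_det_pos:
  assumes "C \<in> carrier_mat n n" and "gram_mat n r * C = 1\<^sub>m n"
  shows "det (gram_mat n r) > 0"
proof (rule det_pos_if_psd)
  show "0 \<le> v \<bullet> (gram_mat n r *\<^sub>v v)" if "v \<in> carrier_vec n" for v :: "real vec"
    using gram_mat_quadratic_form[OF that, where r=r] by simp
  have "det (gram_mat n r) * det C = 1"
    using det_mult[OF gram_mat_carrier[of n r] assms(1)] assms(2) by simp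
  then show "det (gram_mat n r) \<noteq> 0" by auto
qed simp

text \<open>With C the inverse of the Gram matrix of r_0, ..., r_(n-1), this is the element of least
  norm among those g with \<langle>r_i, g\<rangle> = y_i for all i < n.\<close>
definition interpolant :: "real mat \<Rightarrow> (nat \<Rightarrow> 'a::real_inner) \<Rightarrow> real vec \<Rightarrow> 'a" where
  "interpolant C r y = (\<Sum>j<dim_row C. (C *\<^sub>v y) $ j *\<^sub>R r j)"

context
  fixes n :: nat and r :: "nat \<Rightarrow> 'a::real_inner" and C :: "real mat"
  assumes C: "C \<in> carrier_mat n n" and gram_inverse: "gram_mat n r * C = 1\<^sub>m n"
begin

lemma inner_interpolant:
  assumes "y \<in> carrier_vec n" and "i < n"
  shows "inner (r i) (interpolant C r y) = y $ i"
proof -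
  have Cy: "C *\<^sub>v y \<in> carrier_vec n" using C assms(1) by (rule mult_mat_vec_carrier)
  have "inner (r i) (interpolant C r y) = (\<Sum>j<n. gram_mat n r $$ (i, j) * (C *\<^sub>v y) $ j)"
    using C assms(2) by (simp add: interpolant_def inner_sum_right gram_mat_def mult.commute)
  also have "\<dots> = (gram_mat n r *\<^sub>v (C *\<^sub>v y)) $ i"
    by (rule index_mult_mat_vec_sum[OF gram_mat_carrier Cy assms(2), symmetric])
  also have "\<dots> = y $ i"
    using assoc_mult_mat_vec[OF gram_mat_carrier[of n r] C assms(1)] gram_inverse assms(1) by simp
  finally show ?thesis .
qed

lemma inner_vec_interpolant:
  assumes "y \<in> carrier_vec n"
  shows "inner_vec n r (interpolant C r y) = y"
  using assms inner_interpolant[OF assms] by (intro eq_vecI) (auto simp: inner_vec_def)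

lemma norm_interpolant:
  assumes "y \<in> carrier_vec n"
  shows "(norm (interpolant C r y))\<^sup>2 = y \<bullet> (C *\<^sub>v y)"
proof -
  have "(norm (interpolant C r y))\<^sup>2 = (\<Sum>j<n. (C *\<^sub>v y) $ j * inner (r j) (interpolant C r y))"
    unfolding power2_norm_eq_inner by (subst (1) interpolant_def) (use C in \<open>simp add: inner_sum_left\<close>)
  also have "\<dots> = (\<Sum>j<n. y $ j * (C *\<^sub>v y) $ j)"
    using assms by (simp add: inner_interpolant mult.commute)
  also have "\<dots> = y \<bullet> (C *\<^sub>v y)"
    using assms C by (simp add: scalar_prod_def atLeast0LessThan del: index_mult_mat_vec)
  finally show ?thesis .
qed

lemma interpolant_norm_le:
  assumes "inner_vec n r g = y"
  shows "norm (interpolant C r y) \<le> norm g"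
proof -
  have y: "y \<in> carrier_vec n" using assms by (auto simp: inner_vec_def)
  let ?T = "interpolant C r y"
  have "inner (r j) (g - ?T) = 0" if "j < n" for j
    using that assms inner_interpolant[OF y that] by (auto simp: inner_diff_right inner_vec_def)
  moreover have "inner ?T (g - ?T) = (\<Sum>j<n. (C *\<^sub>v y) $ j * inner (r j) (g - ?T))"
    by (subst (1) interpolant_def) (use C in \<open>simp add: inner_sum_left\<close>)
  ultimately have "inner ?T (g - ?T) = 0" by simp
  then have "(norm g)\<^sup>2 = (norm ?T)\<^sup>2 + (norm (g - ?T))\<^sup>2"
    using norm_add_Pythagorean[of ?T "g - ?T"] by (simp add: real_inner_class.orthogonal_def)
  then show ?thesis by (simp add: power2_le_imp_le)
qed

lemma interpolant_midpoint:
  assumes "x \<in> carrier_vec n" and "z \<in> carrier_vec n"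
  shows "interpolant C r ((1/2) \<cdot>\<^sub>v (x + z)) = (1/2) *\<^sub>R (interpolant C r x + interpolant C r z)"
proof -
  have "C *\<^sub>v ((1/2) \<cdot>\<^sub>v (x + z)) = (1/2) \<cdot>\<^sub>v (C *\<^sub>v x + C *\<^sub>v z)"
    using C assms by (simp add: mult_mat_vec mult_add_distrib_mat_vec)
  then show ?thesis
    using C assms
    by (simp add: interpolant_def scaleR_add_left scaleR_add_right scaleR_sum_right sum.distrib
        algebra_simps)
qed

lemma representer_minimizer:
  fixes \<Psi> :: "real vec \<Rightarrow> real"
  assumes "\<gamma> > 0"
    and min: "\<And>g. \<Psi> (inner_vec n r g0) + \<gamma> * (norm g0)\<^sup>2
      \<le> \<Psi> (inner_vec n r g) + \<gamma> * (norm g)\<^sup>2"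
    and y: "y \<in> carrier_vec n"
  shows "\<Psi> (inner_vec n r g0) + \<gamma> * (inner_vec n r g0 \<bullet> (C *\<^sub>v inner_vec n r g0))
      \<le> \<Psi> y + \<gamma> * (y \<bullet> (C *\<^sub>v y))"
proof -
  let ?x0 = "inner_vec n r g0"
  have x0: "?x0 \<in> carrier_vec n" by (simp add: inner_vec_def)
  have "(norm (interpolant C r ?x0))\<^sup>2 \<le> (norm g0)\<^sup>2"
    by (simp add: interpolant_norm_le power_mono)
  then have "\<Psi> ?x0 + \<gamma> * (?x0 \<bullet> (C *\<^sub>v ?x0)) \<le> \<Psi> ?x0 + \<gamma> * (norm g0)\<^sup>2"
    using \<open>\<gamma> > 0\<close> by (simp add: norm_interpolant[OF x0, symmetric])
  also have "\<dots> \<le> \<Psi> y + \<gamma> * (norm (interpolant C r y))\<^sup>2"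
    using min[of "interpolant C r y"] by (simp add: inner_vec_interpolant[OF y])
  also have "\<dots> = \<Psi> y + \<gamma> * (y \<bullet> (C *\<^sub>v y))" by (simp add: norm_interpolant[OF y])
  finally show ?thesis .
qed

lemma representer_minimizer_unique:
  fixes \<Psi> :: "real vec \<Rightarrow> real"
  assumes "\<gamma> > 0"
    and min: "\<And>g. \<Psi> (inner_vec n r g0) + \<gamma> * (norm g0)\<^sup>2
      \<le> \<Psi> (inner_vec n r g) + \<gamma> * (norm g)\<^sup>2"
    and midpoint_convex: "\<And>x z. x \<in> carrier_vec n \<Longrightarrow> z \<in> carrier_vec n \<Longrightarrow>
      \<Psi> ((1/2) \<cdot>\<^sub>v (x + z)) \<le> (\<Psi> x + \<Psi> z) / 2"
    and x: "x \<in> carrier_vec n"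
    and x_min: "\<And>y. y \<in> carrier_vec n \<Longrightarrow>
      \<Psi> x + \<gamma> * (x \<bullet> (C *\<^sub>v x)) \<le> \<Psi> y + \<gamma> * (y \<bullet> (C *\<^sub>v y))"
  shows "x = inner_vec n r g0"
proof -
  let ?T = "interpolant C r"
  define x0 where "x0 = inner_vec n r g0"
  define Q where "Q y = \<Psi> y + \<gamma> * (norm (?T y))\<^sup>2" for y
  have x0: "x0 \<in> carrier_vec n" by (simp add: x0_def inner_vec_def)
  define m where "m = (1/2) \<cdot>\<^sub>v (x + x0)"
  have m: "m \<in> carrier_vec n" using x x0 by (simp add: m_def)
  have Q_le: "Q x \<le> Q y" if "y \<in> carrier_vec n" for y
    using x_min[OF that] by (simp add: Q_def norm_interpolant x that)
  have "Q x0 \<le> Q x"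
    unfolding Q_def norm_interpolant[OF x] norm_interpolant[OF x0] unfolding x0_def
    by (rule representer_minimizer[OF \<open>\<gamma> > 0\<close> min x])
  have "(norm ((1/2) *\<^sub>R (a + b)))\<^sup>2 = ((norm a)\<^sup>2 + (norm b)\<^sup>2) / 2 - (norm (a - b))\<^sup>2 / 4"
    for a b :: 'a
    by (simp add: power2_norm_eq_inner inner_add inner_diff inner_commute field_simps)
  then have "Q m = \<Psi> m + \<gamma> * (((norm (?T x))\<^sup>2 + (norm (?T x0))\<^sup>2) / 2 - (norm (?T x - ?T x0))\<^sup>2 / 4)"
    unfolding Q_def m_def interpolant_midpoint[OF x x0] by simp
  moreover have "\<Psi> m \<le> (\<Psi> x + \<Psi> x0) / 2" unfolding m_def by (rule midpoint_convex[OF x x0])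
  ultimately have "\<gamma> * (norm (?T x - ?T x0))\<^sup>2 \<le> 2 * (Q x + Q x0) - 4 * Q m"
    unfolding Q_def by (simp add: algebra_simps)
  also have "\<dots> \<le> 0" using Q_le[OF m] \<open>Q x0 \<le> Q x\<close> by (simp add: algebra_simps)
  finally have "?T x = ?T x0" using \<open>\<gamma> > 0\<close> by (simp add: mult_le_0_iff)
  then show ?thesis
    using inner_vec_interpolant[OF x] inner_vec_interpolant[OF x0] by (simp add: x0_def)
qed

end

section \<open>Log-concavity of the Gaussian box likelihood\<close>

lemma interval_moment_bounds:
  fixes f :: "real \<Rightarrow> real"
  assumes "A \<le> B" and f: "continuous_on {A..B} f" and nonneg: "\<And>w. w \<in> {A..B} \<Longrightarrow> 0 \<le> f w"
  shows "A * (LBINT w=A..B. f w) \<le> (LBINT w=A..B. w * f w)"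
    and "(LBINT w=A..B. w * f w) \<le> B * (LBINT w=A..B. f w)"
proof -
  have int: "set_integrable lborel {A..B} (\<lambda>w. c * f w)" "set_integrable lborel {A..B} (\<lambda>w. w * f w)"
    for c
    by (intro borel_integrable_atLeastAtMost' continuous_intros f)+
  have "(LBINT w:{A..B}. A * f w) \<le> (LBINT w:{A..B}. w * f w)"
    by (rule set_integral_mono[OF int]) (auto intro!: mult_right_mono nonneg)
  then show "A * (LBINT w=A..B. f w) \<le> (LBINT w=A..B. w * f w)"
    using \<open>A \<le> B\<close> by (simp add: interval_integral_Icc)
  have "(LBINT w:{A..B}. w * f w) \<le> (LBINT w:{A..B}. B * f w)"
    by (rule set_integral_mono[OF int(2) int(1)]) (auto intro!: mult_right_mono nonneg)
  then show "(LBINT w=A..B. w * f w) \<le> B * (LBINT w=A..B. f w)"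
    using \<open>A \<le> B\<close> by (simp add: interval_integral_Icc)
qed

lemma gaussian_has_antiderivative:
  fixes s :: real
  assumes "s > 0"
  obtains F where "\<And>w. (F has_real_derivative exp (- w\<^sup>2 / (2 * s))) (at w)"
proof -
  have "isCont (\<lambda>w. exp (- w\<^sup>2 / (2 * s))) w" for w :: real
    using \<open>s > 0\<close> by (intro continuous_intros) auto
  then obtain F where "\<And>w. (F has_vector_derivative exp (- w\<^sup>2 / (2 * s))) (at w)"
    using einterval_antiderivative[of "-\<infinity>" "\<infinity>" "\<lambda>w. exp (- w\<^sup>2 / (2 * s))"] by auto
  then show ?thesis
    by (intro that) (simp add: has_real_derivative_iff_has_vector_derivative)
qed

lemma gaussian_moment_ineq:
  fixes s A B :: real
  defines "\<phi> \<equiv> \<lambda>w. exp (- w\<^sup>2 / (2 * s))"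
  assumes "s > 0" and "A < B"
  shows "(A * \<phi> A - B * \<phi> B) * (LBINT w=A..B. \<phi> w) \<le> s * (\<phi> A - \<phi> B)\<^sup>2"
proof -
  have cont: "continuous_on {A..B} \<phi>" unfolding \<phi>_def using \<open>s > 0\<close> by (intro continuous_intros) auto
  \<comment> \<open>The first moment is explicit because w \<phi>(w) = (- s \<phi>)'(w).\<close>
  have moment: "(LBINT w=A..B. w * \<phi> w) = s * (\<phi> A - \<phi> B)"
  proof -
    have "(LBINT w=A..B. w * \<phi> w) = - s * \<phi> B - - s * \<phi> A"
    proof (rule interval_integral_FTC_finite)
      show "continuous_on {min A B..max A B} (\<lambda>w. w * \<phi> w)"
        unfolding \<phi>_def using \<open>s > 0\<close> by (intro continuous_intros) auto
      show "((\<lambda>w. - s * \<phi> w) has_vector_derivative w * \<phi> w) (at w within {min A B..max A B})"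
        for w
        unfolding \<phi>_def using \<open>s > 0\<close>
        by (auto intro!: derivative_eq_intros has_vector_derivative_at_within
            simp: has_real_derivative_iff_has_vector_derivative[symmetric] power2_eq_square)
    qed
    then show ?thesis by (simp add: algebra_simps)
  qed
  have pos: "\<phi> w > 0" for w unfolding \<phi>_def by simp
  have "\<phi> A * (A * (LBINT w=A..B. \<phi> w)) \<le> \<phi> A * (s * (\<phi> A - \<phi> B))"
    using interval_moment_bounds(1)[OF less_imp_le[OF \<open>A < B\<close>] cont less_imp_le[OF pos]]
      pos[of A] pos[of B]
    by (simp add: moment)
  moreover have "\<phi> B * (s * (\<phi> A - \<phi> B)) \<le> \<phi> B * (B * (LBINT w=A..B. \<phi> w))"
    using interval_moment_bounds(2)[OF less_imp_le[OF \<open>A < B\<close>] cont less_imp_le[OF pos]]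
      pos[of A] pos[of B]
    by (simp add: moment)
  ultimately show ?thesis by (simp add: power2_eq_square algebra_simps)
qed

definition gauss_box :: "real \<Rightarrow> real \<Rightarrow> real \<Rightarrow> real \<Rightarrow> real" where
  "gauss_box s a b x = (LBINT z:{a..<b}. exp (- (z - x)\<^sup>2 / (2 * s)))"

lemma gauss_box_eq_antiderivative:
  fixes s a b :: real
  assumes "s > 0" and "a \<le> b"
    and F: "\<And>w. (F has_real_derivative exp (- w\<^sup>2 / (2 * s))) (at w)"
  shows "gauss_box s a b x = F (b - x) - F (a - x)"
    and "(LBINT w=a - x..b - x. exp (- w\<^sup>2 / (2 * s))) = F (b - x) - F (a - x)"
proof -
  have "(LBINT z=a..b. exp (- (z - x)\<^sup>2 / (2 * s))) = F (b - x) - F (a - x)"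
  proof (rule interval_integral_FTC_finite)
    show "continuous_on {min a b..max a b} (\<lambda>z. exp (- (z - x)\<^sup>2 / (2 * s)))"
      using \<open>s > 0\<close> by (intro continuous_intros) auto
    show "((\<lambda>z. F (z - x)) has_vector_derivative exp (- (z - x)\<^sup>2 / (2 * s)))
        (at z within {min a b..max a b})" for z
    proof -
      have "((\<lambda>z. F (z - x)) has_real_derivative exp (- (z - x)\<^sup>2 / (2 * s)) * 1) (at z)"
        by (rule DERIV_chain2[OF F]) (auto intro!: derivative_eq_intros)
      then show ?thesis
        by (simp add: has_real_derivative_iff_has_vector_derivative has_vector_derivative_at_within)
    qed
  qed
  then show "gauss_box s a b x = F (b - x) - F (a - x)"
    using \<open>a \<le> b\<close> by (simp add: gauss_box_def interval_integral_Ico)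
  show "(LBINT w=a - x..b - x. exp (- w\<^sup>2 / (2 * s))) = F (b - x) - F (a - x)"
  proof (rule interval_integral_FTC_finite)
    show "continuous_on {min (a - x) (b - x)..max (a - x) (b - x)} (\<lambda>w. exp (- w\<^sup>2 / (2 * s)))"
      using \<open>s > 0\<close> by (intro continuous_intros) auto
    show "(F has_vector_derivative exp (- w\<^sup>2 / (2 * s))) (at w within {min (a - x) (b - x)..max (a - x) (b - x)})"
      for w
      using F[of w] unfolding has_real_derivative_iff_has_vector_derivative
      by (rule has_vector_derivative_at_within)
  qed
qed

lemma gauss_box_pos:
  assumes "s > 0" and "a < b"
  shows "gauss_box s a b x > 0"
proof -
  obtain F where F: "\<And>w. (F has_real_derivative exp (- w\<^sup>2 / (2 * s))) (at w)"
    using gaussian_has_antiderivative[OF \<open>s > 0\<close>] by blast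
  have "F (a - x) < F (b - x)"
  proof (rule DERIV_pos_imp_increasing[where f = F])
    show "\<exists>y. (F has_real_derivative y) (at w) \<and> 0 < y" for w using F exp_gt_zero by blast
  qed (use \<open>a < b\<close> in simp)
  then show ?thesis using gauss_box_eq_antiderivative(1)[OF \<open>s > 0\<close> _ F] \<open>a < b\<close> by simp
qed

lemma convex_on_neg_ln_gauss_box:
  assumes "s > 0" and "a < b"
  shows "convex_on UNIV (\<lambda>x. - ln (gauss_box s a b x))"
proof -
  define \<phi> where "\<phi> w = exp (- w\<^sup>2 / (2 * s))" for w
  obtain F where F: "\<And>w. (F has_real_derivative \<phi> w) (at w)"
    using gaussian_has_antiderivative[OF \<open>s > 0\<close>] unfolding \<phi>_def by blast
  define I where "I x = F (b - x) - F (a - x)" for x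
  define D1 where "D1 x = \<phi> (a - x) - \<phi> (b - x)" for x
  define D2 where "D2 x = ((a - x) * \<phi> (a - x) - (b - x) * \<phi> (b - x)) / s" for x
  have box: "gauss_box s a b x = I x" for x
    using gauss_box_eq_antiderivative(1)[OF \<open>s > 0\<close> _ F[unfolded \<phi>_def]] \<open>a < b\<close>
    by (simp add: I_def)
  have I_pos: "I x > 0" for x using gauss_box_pos[OF assms] box by simp
  have dI: "(I has_real_derivative D1 x) (at x)" for x
  proof -
    have "((\<lambda>x. F (b - x)) has_real_derivative \<phi> (b - x) * - 1) (at x)"
      by (rule DERIV_chain2[OF F]) (auto intro!: derivative_eq_intros)
    moreover have "((\<lambda>x. F (a - x)) has_real_derivative \<phi> (a - x) * - 1) (at x)"
      by (rule DERIV_chain2[OF F]) (auto intro!: derivative_eq_intros)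
    ultimately
    show ?thesis unfolding I_def D1_def by (auto intro!: derivative_eq_intros)
  qed
  have d\<phi>: "(\<phi> has_real_derivative - (w / s) * \<phi> w) (at w)" for w
    unfolding \<phi>_def using \<open>s > 0\<close>
    by (auto intro!: derivative_eq_intros simp: field_simps power2_eq_square)
  have dD1: "(D1 has_real_derivative D2 x) (at x)" for x
  proof -
    have "((\<lambda>x. \<phi> (b - x)) has_real_derivative - ((b - x) / s) * \<phi> (b - x) * - 1) (at x)"
      by (rule DERIV_chain2[OF d\<phi>]) (auto intro!: derivative_eq_intros)
    moreover have "((\<lambda>x. \<phi> (a - x)) has_real_derivative - ((a - x) / s) * \<phi> (a - x) * - 1) (at x)"
      by (rule DERIV_chain2[OF d\<phi>]) (auto intro!: derivative_eq_intros)
    ultimately show ?thesis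
      unfolding D1_def D2_def using \<open>s > 0\<close> by (auto intro!: derivative_eq_intros simp: field_simps)
  qed
  \<comment> \<open>I'' I \<le> I'^2, i.e. log-concavity of I, is the Gaussian moment inequality on [a - x, b - x].\<close>
  have "D2 x * I x \<le> (D1 x)\<^sup>2" for x
  proof -
    have "(LBINT w=a - x..b - x. \<phi> w) = I x"
      using gauss_box_eq_antiderivative(2)[OF \<open>s > 0\<close> _ F[unfolded \<phi>_def]] \<open>a < b\<close>
      by (simp add: I_def \<phi>_def)
    then have "s * (D2 x * I x) \<le> s * (D1 x)\<^sup>2"
      using gaussian_moment_ineq[OF \<open>s > 0\<close>, of "a - x" "b - x"] \<open>a < b\<close> \<open>s > 0\<close>
      by (simp add: D1_def D2_def \<phi>_def)
    then show ?thesis using \<open>s > 0\<close> by simp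
  qed
  then show ?thesis
    unfolding box
  proof (intro f''_ge0_imp_convex[where f' = "\<lambda>x. - (D1 x / I x)"
        and f'' = "\<lambda>x. - ((D2 x * I x - D1 x * D1 x) / (I x * I x))"])
    show "DERIV (\<lambda>x. - ln (I x)) x :> - (D1 x / I x)" for x
      using I_pos[of x] by (auto intro!: derivative_eq_intros dI simp: field_simps)
    show "DERIV (\<lambda>x. - (D1 x / I x)) x :> - ((D2 x * I x - D1 x * D1 x) / (I x * I x))" for x
      using I_pos[of x] by (auto intro!: derivative_eq_intros dI dD1 simp: field_simps)
  qed (auto simp: power2_eq_square divide_nonpos_pos I_pos)
qed

section \<open>The regularised criterion and the posterior\<close>

lemma kernel_integral_eq_inner:
  fixes ev :: "'h::{real_inner,complete_space} \<Rightarrow> real \<Rightarrow> real"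
  assumes kernel: "pos_def_kernel k" and rkhs: "is_rkhs k ev"
    and ra: "\<And>g. conv ev u g sa = inner ra g" and rb: "\<And>g. conv ev u g sb = inner rb g"
  shows "(LINT \<xi>:{0..}|lborel. LINT \<tau>:{0..}|lborel. u (sa - \<xi>) * u (sb - \<tau>) * k \<xi> \<tau>) = inner ra rb"
proof -
  obtain kf :: "real \<Rightarrow> 'h" where kf_eval: "\<And>x y. 0 \<le> x \<Longrightarrow> 0 \<le> y \<Longrightarrow> ev (kf x) y = k y x"
    and reproducing: "\<And>g x. 0 \<le> x \<Longrightarrow> ev g x = inner g (kf x)"
    using rkhs unfolding is_rkhs_def by blast
  have sym: "k x y = k y x" if "0 \<le> x" "0 \<le> y" for x y
    using kernel that unfolding pos_def_kernel_def by blast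
  \<comment> \<open>By symmetry of k, the inner integral is u(sa - \<xi>) (k(\<xi>, \<cdot>) * u)(sb) = u(sa - \<xi>) rb(\<xi>).\<close>
  have "(LINT \<tau>:{0..}|lborel. u (sa - \<xi>) * u (sb - \<tau>) * k \<xi> \<tau>) = u (sa - \<xi>) * ev rb \<xi>"
    if "0 \<le> \<xi>" for \<xi>
  proof -
    have "(LINT \<tau>:{0..}|lborel. u (sa - \<xi>) * u (sb - \<tau>) * k \<xi> \<tau>)
        = (LINT \<tau>:{0..}|lborel. u (sa - \<xi>) * (ev (kf \<xi>) \<tau> * u (sb - \<tau>)))"
      by (rule set_lebesgue_integral_cong) (use that kf_eval sym in auto)
    also have "\<dots> = u (sa - \<xi>) * conv ev u (kf \<xi>) sb"
      unfolding conv_def by (rule set_integral_mult_right)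
    also have "\<dots> = u (sa - \<xi>) * ev rb \<xi>" using rb reproducing that by (simp add: inner_commute)
    finally show ?thesis .
  qed
  then have "(LINT \<xi>:{0..}|lborel. LINT \<tau>:{0..}|lborel. u (sa - \<xi>) * u (sb - \<tau>) * k \<xi> \<tau>)
      = conv ev u rb sa"
    unfolding conv_def by (intro set_lebesgue_integral_cong) (auto simp: mult.commute)
  then show ?thesis using ra by simp
qed

lemma cov_mat_eq_scaled_gram_mat:
  fixes ev :: "'h::{real_inner,complete_space} \<Rightarrow> real \<Rightarrow> real"
  assumes "pos_def_kernel k" and "is_rkhs k ev"
    and r: "\<And>j g. j < n \<Longrightarrow> conv ev u g (t (j + 1)) = inner (r j) g"
  shows "cov_mat \<gamma> k u t n = (1/\<gamma>) \<cdot>\<^sub>m gram_mat n r"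
  using kernel_integral_eq_inner[OF assms(1,2) r r]
  by (intro eq_matI) (auto simp: cov_mat_def gram_mat_def)

lemma scaled_gram_mat_inverse:
  fixes r :: "nat \<Rightarrow> 'a::real_inner" and n :: nat and \<gamma> :: real
  defines "S \<equiv> (1/\<gamma>) \<cdot>\<^sub>m gram_mat n r"
  defines "C \<equiv> (1/\<gamma>) \<cdot>\<^sub>m mat_inv S"
  assumes "invertible_mat S" and "\<gamma> > 0"
  shows "C \<in> carrier_mat n n" and "gram_mat n r * C = 1\<^sub>m n" and "det S > 0"
    and "\<And>y. y \<in> carrier_vec n \<Longrightarrow> y \<bullet> (mat_inv S *\<^sub>v y) = \<gamma> * (y \<bullet> (C *\<^sub>v y))"
proof -
  have S: "S \<in> carrier_mat n n" by (simp add: S_def)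
  then have B: "mat_inv S \<in> carrier_mat n n" and "S * mat_inv S = 1\<^sub>m n"
    using mat_inv_inverts[OF \<open>invertible_mat S\<close>] by auto
  then show C: "C \<in> carrier_mat n n" by (simp add: C_def)
  have "gram_mat n r = \<gamma> \<cdot>\<^sub>m S" using \<open>\<gamma> > 0\<close> by (intro eq_matI) (simp_all add: S_def)
  then show GC: "gram_mat n r * C = 1\<^sub>m n"
    using \<open>S * mat_inv S = 1\<^sub>m n\<close> \<open>\<gamma> > 0\<close> S B
    by (simp add: C_def mult_smult_distrib[of _ n n _ n] mult_smult_assoc_mat[of _ n n _ n])
      (rule eq_matI; simp)
  show "det S > 0"
    using gram_mat_det_pos[OF C GC] \<open>\<gamma> > 0\<close> by (simp add: S_def)
  show "y \<bullet> (mat_inv S *\<^sub>v y) = \<gamma> * (y \<bullet> (C *\<^sub>v y))" if "y \<in> carrier_vec n" for y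
    using that B \<open>\<gamma> > 0\<close> by (simp add: C_def smult_mat_mult_mat_vec[of _ n n])
qed

definition neg_log_box_lik :: "nat \<Rightarrow> real \<Rightarrow> real \<Rightarrow> (nat \<Rightarrow> real) \<Rightarrow> real vec \<Rightarrow> real" where
  "neg_log_box_lik N \<sigma>2 h \<eta> y = - 2 * (\<Sum>i=1..N. ln (gauss_box \<sigma>2 (\<eta> i) (\<eta> i + h) (y $ (i - 1))))"

lemma post_unnorm_eq:
  assumes "det S > 0" and "\<sigma>2 > 0" and "h > 0"
  shows "post_unnorm S N \<sigma>2 h \<eta> y
    = exp (- (y \<bullet> (mat_inv S *\<^sub>v y) + neg_log_box_lik N \<sigma>2 h \<eta> y) / 2)
      / (sqrt ((2*pi) ^ dim_row S * det S) * sqrt (2*pi*\<sigma>2) ^ N)"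
proof -
  have "likelihood N \<sigma>2 h \<eta> y
      = (\<Prod>i=1..N. gauss_box \<sigma>2 (\<eta> i) (\<eta> i + h) (y $ (i - 1))) / sqrt (2*pi*\<sigma>2) ^ N"
    by (simp add: likelihood_def gauss_box_def prod_dividef)
  also have "(\<Prod>i=1..N. gauss_box \<sigma>2 (\<eta> i) (\<eta> i + h) (y $ (i - 1)))
      = exp (- neg_log_box_lik N \<sigma>2 h \<eta> y / 2)"
    using gauss_box_pos[OF \<open>\<sigma>2 > 0\<close>] \<open>h > 0\<close> by (simp add: neg_log_box_lik_def exp_sum)
  finally show ?thesis
    by (simp add: post_unnorm_def gauss_density_def exp_add[symmetric] diff_divide_distrib)
qed

lemma is_MAP_iff_minimizer:
  assumes "det S > 0" and "\<sigma>2 > 0" and "h > 0"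
  shows "is_MAP S N \<sigma>2 h \<eta> x \<longleftrightarrow> x \<in> carrier_vec (dim_row S) \<and>
    (\<forall>y \<in> carrier_vec (dim_row S). x \<bullet> (mat_inv S *\<^sub>v x) + neg_log_box_lik N \<sigma>2 h \<eta> x
        \<le> y \<bullet> (mat_inv S *\<^sub>v y) + neg_log_box_lik N \<sigma>2 h \<eta> y)"
proof -
  have "sqrt ((2*pi) ^ dim_row S * det S) * sqrt (2*pi*\<sigma>2) ^ N > 0"
    using assms by simp
  then have "post_unnorm S N \<sigma>2 h \<eta> y \<le> post_unnorm S N \<sigma>2 h \<eta> x \<longleftrightarrow>
      x \<bullet> (mat_inv S *\<^sub>v x) + neg_log_box_lik N \<sigma>2 h \<eta> x
        \<le> y \<bullet> (mat_inv S *\<^sub>v y) + neg_log_box_lik N \<sigma>2 h \<eta> y" for y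
    by (auto simp: post_unnorm_eq[OF assms] divide_le_cancel)
  then show ?thesis unfolding is_MAP_def by blast
qed

lemma crit_eq_neg_log_box_lik:
  assumes "\<forall>i\<in>{1..N}. t i = real i * \<Delta>" and "N \<le> n"
  shows "crit ev u \<Delta> N \<gamma> \<sigma>2 h \<eta> g
    = neg_log_box_lik N \<sigma>2 h \<eta> (vec n (\<lambda>j. conv ev u g (t (j + 1)))) + \<gamma> * (norm g)\<^sup>2"
proof -
  have "(\<Sum>i=1..N. ln (gauss_box \<sigma>2 (\<eta> i) (\<eta> i + h) (conv ev u g (real i * \<Delta>))))
      = (\<Sum>i=1..N. ln (gauss_box \<sigma>2 (\<eta> i) (\<eta> i + h) (vec n (\<lambda>j. conv ev u g (t (j + 1))) $ (i - 1))))"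
    using assms by (intro sum.cong) auto
  then show ?thesis by (simp add: crit_def neg_log_box_lik_def gauss_box_def)
qed

lemma neg_log_box_lik_midpoint_convex:
  assumes "\<sigma>2 > 0" and "h > 0" and "N \<le> n" and x: "x \<in> carrier_vec n" and z: "z \<in> carrier_vec n"
  shows "neg_log_box_lik N \<sigma>2 h \<eta> ((1/2) \<cdot>\<^sub>v (x + z))
    \<le> (neg_log_box_lik N \<sigma>2 h \<eta> x + neg_log_box_lik N \<sigma>2 h \<eta> z) / 2"
proof -
  let ?l = "\<lambda>i w. ln (gauss_box \<sigma>2 (\<eta> i) (\<eta> i + h) w)"
  have "(?l i (x $ (i - 1)) + ?l i (z $ (i - 1))) / 2 \<le> ?l i ((1/2) * (x $ (i - 1) + z $ (i - 1)))"
    for i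
    using convex_onD[OF convex_on_neg_ln_gauss_box[OF \<open>\<sigma>2 > 0\<close>], of "\<eta> i" "\<eta> i + h" "1/2"
        "x $ (i - 1)" "z $ (i - 1)"] \<open>h > 0\<close>
    by (simp add: algebra_simps)
  then have "(\<Sum>i=1..N. (?l i (x $ (i - 1)) + ?l i (z $ (i - 1))) / 2)
      \<le> (\<Sum>i=1..N. ?l i (((1/2) \<cdot>\<^sub>v (x + z)) $ (i - 1)))"
    using \<open>N \<le> n\<close> x z by (intro sum_mono) auto
  then show ?thesis
    by (simp add: neg_log_box_lik_def sum.distrib sum_divide_distrib[symmetric])
qed

theorem lemma1:
  fixes \<Delta> h \<gamma> \<sigma>2 :: real and N M :: nat and \<eta> :: "nat \<Rightarrow> real"
    and u :: "real \<Rightarrow> real" and k :: "real \<Rightarrow> real \<Rightarrow> real"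
    and ev :: "'h::{real_inner,complete_space} \<Rightarrow> real \<Rightarrow> real"
    and t :: "nat \<Rightarrow> real" and g_breve :: 'h
  assumes "\<Delta> > 0" and "h > 0" and "\<gamma> > 0" and "\<sigma>2 > 0"
    and causal: "\<forall>s<0. u s = 0"
    and kernel: "pos_def_kernel k"
    and rkhs: "is_rkhs k ev"
    and bounded: "\<forall>j\<in>{1..N+M}. bounded_linear (\<lambda>g. conv ev u g (t j))"
    and t_obs: "\<forall>i\<in>{1..N}. t i = real i * \<Delta>"
    and nonsing: "invertible_mat (cov_mat \<gamma> k u t (N+M))"
    and minimizer: "\<forall>g. crit ev u \<Delta> N \<gamma> \<sigma>2 h \<eta> g_breve \<le> crit ev u \<Delta> N \<gamma> \<sigma>2 h \<eta> g"
  shows "is_MAP (cov_mat \<gamma> k u t (N+M)) N \<sigma>2 h \<eta> (vec (N+M) (\<lambda>j. conv ev u g_breve (t (j+1))))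
       \<and> (\<forall>x. is_MAP (cov_mat \<gamma> k u t (N+M)) N \<sigma>2 h \<eta> x
              \<longrightarrow> x = vec (N+M) (\<lambda>j. conv ev u g_breve (t (j+1))))"
proof -
  define n where "n = N + M"
  have "N \<le> n" by (simp add: n_def)
  have "\<exists>r. \<forall>g. conv ev u g (t (j + 1)) = inner r g" if "j < n" for j
    by (rule riesz_representation) (use bounded that in \<open>auto simp: n_def\<close>)
  then obtain r where r: "\<And>j g. j < n \<Longrightarrow> conv ev u g (t (j + 1)) = inner (r j) g"
    by metis
  define \<Psi> where "\<Psi> = neg_log_box_lik N \<sigma>2 h \<eta>"
  define S where "S = (1/\<gamma>) \<cdot>\<^sub>m gram_mat n r"
  define C where "C = (1/\<gamma>) \<cdot>\<^sub>m mat_inv S"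
  have cov: "cov_mat \<gamma> k u t n = S"
    unfolding S_def using r by (rule cov_mat_eq_scaled_gram_mat[OF kernel rkhs])
  note inverse = scaled_gram_mat_inverse[OF nonsing[folded n_def, unfolded cov S_def] \<open>\<gamma> > 0\<close>,
      folded S_def C_def]
  have x_eq: "vec n (\<lambda>j. conv ev u g (t (j + 1))) = inner_vec n r g" for g
    using r by (auto simp: inner_vec_def)
  have crit: "crit ev u \<Delta> N \<gamma> \<sigma>2 h \<eta> g = \<Psi> (inner_vec n r g) + \<gamma> * (norm g)\<^sup>2" for g
    unfolding crit_eq_neg_log_box_lik[OF t_obs \<open>N \<le> n\<close>] x_eq \<Psi>_def ..
  have MAP_iff: "is_MAP S N \<sigma>2 h \<eta> x \<longleftrightarrow> x \<in> carrier_vec n \<and>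
      (\<forall>y\<in>carrier_vec n. \<Psi> x + \<gamma> * (x \<bullet> (C *\<^sub>v x)) \<le> \<Psi> y + \<gamma> * (y \<bullet> (C *\<^sub>v y)))" for x
    using is_MAP_iff_minimizer[OF inverse(3) \<open>\<sigma>2 > 0\<close> \<open>h > 0\<close>, of N \<eta> x] inverse(4)
    by (auto simp: S_def \<Psi>_def add.commute)
  note min = minimizer[rule_format, unfolded crit]
  show ?thesis
    unfolding n_def[symmetric] cov x_eq MAP_iff
    using representer_minimizer[OF inverse(1,2) \<open>\<gamma> > 0\<close> min]
      representer_minimizer_unique[OF inverse(1,2) \<open>\<gamma> > 0\<close> min
        neg_log_box_lik_midpoint_convex[OF \<open>\<sigma>2 > 0\<close> \<open>h > 0\<close> \<open>N \<le> n\<close>, where \<eta> = \<eta>,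
          folded \<Psi>_def]]
    by (auto simp: inner_vec_def n_def)
qed

end
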